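(* Let $j>0$ and $a_0,\dots,a_j\in\mathbb{Z}$, and let $p(t)=a_0+a_1t+\cdots+a_jt^j$. Suppose there is an integer polynomial $q(t)=b_0+b_1t+\cdots+b_\ell t^\ell$ with $p(t)\,q(t)=1-t^{j+\ell}$. For each integer $n\ge j+1$ let $G_n$ be the abelian group with generators $x_i$, $i\in\mathbb{Z}/n\mathbb{Z}$, and relations $a_0x_i+a_1x_{i+1}+\cdots+a_jx_{i+j}=0$ for every $i\in\mathbb{Z}/n\mathbb{Z}$. Then $G_n\cong G_{n+j+\ell}$ for every $n\ge j+1$. *)

theory Defs
  imports "HOL-Algebra.Algebra" "HOL-Computational_Algebra.Polynomial"
begin

text \<open>The free abelian group Z^n on generators x_0,...,x_{n-1} (indices read mod n),
  as the additive group of integer vectors indexed by {0..<n} (functions vanishing outside).\<close>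
definition Zvec :: "nat \<Rightarrow> (nat \<Rightarrow> int) monoid" where
  "Zvec n = \<lparr>partial_object.carrier = {f. \<forall>k\<ge>n. f k = 0},
             monoid.mult = (\<lambda>f g k. f k + g k),
             monoid.one = (\<lambda>k. 0)\<rparr>"

definition relvec :: "int poly \<Rightarrow> nat \<Rightarrow> nat \<Rightarrow> nat \<Rightarrow> (nat \<Rightarrow> int)" where
  "relvec p j n i = (\<lambda>k. if k < n then (\<Sum>m\<le>j. if (i + m) mod n = k then coeff p m else 0) else 0)"

definition Gpres :: "int poly \<Rightarrow> nat \<Rightarrow> nat \<Rightarrow> (nat \<Rightarrow> int) set monoid" where
  "Gpres p j n = Zvec n Mod generate (Zvec n) (relvec p j n ` {..<n})"

end

theory Submission
  imports Defs
begin

text \<open>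
  Write \<open>R\<^sub>M\<close> for the relation subgroup of \<open>\<int>\<^sup>M\<close>, so that \<open>G\<^sub>M = \<int>\<^sup>M / R\<^sub>M\<close>, and
  put \<open>N = n + j + l\<close>. Summing the relations at \<open>a, \<dots>, a + l\<close> with the coefficients of \<open>q\<close>
  yields \<open>p q\<close> acting on \<open>x\<^sub>a\<close>, i.e. \<open>x\<^sub>a - x\<^bsub>a+j+l\<^esub>\<close>; so in every \<open>G\<^sub>M\<close> the generators are
  \<open>(j + l)\<close>-periodic. As \<open>N \<equiv> n\<close> modulo \<open>j + l\<close> and \<open>n \<equiv> -(j + l)\<close> modulo \<open>N\<close>, the index of a
  generator may then be reduced modulo \<open>N\<close> in \<open>G\<^sub>n\<close> and modulo \<open>n\<close> in \<open>G\<^sub>N\<close>. Consequently the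
  folding map \<open>\<int>\<^sup>N \<rightarrow> \<int>\<^sup>n\<close>, \<open>e\<^sub>i \<mapsto> e\<^bsub>i mod n\<^esub>\<close>, is onto and satisfies
  \<open>fold f \<in> R\<^sub>n \<longleftrightarrow> f \<in> R\<^sub>N\<close>, so it induces the isomorphism \<open>G\<^sub>N \<cong> G\<^sub>n\<close>.
\<close>

lemma FactGroup_iso_of_surj_hom:
  assumes hom: "group_hom G H h" and surj: "h ` carrier G = carrier H"
    and B: "B \<lhd> H" and A: "A \<subseteq> carrier G"
    and preimage: "\<And>g. g \<in> carrier G \<Longrightarrow> h g \<in> B \<longleftrightarrow> g \<in> A"
  shows "G Mod A \<cong> H Mod B"
proof -
  interpret G: group G using hom by (simp add: group_hom_def)
  interpret H: group H using hom by (simp add: group_hom_def group_hom_axioms_def)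
  interpret B: normal B H by (rule B)
  define \<phi> where "\<phi> = (\<lambda>b. B #>\<^bsub>H\<^esub> b) \<circ> h"
  have "\<phi> \<in> hom G (H Mod B)"
    unfolding \<phi>_def by (rule Group.hom_compose[OF group_hom.homh[OF hom] B.r_coset_hom_Mod])
  then interpret \<phi>: group_hom G "H Mod B" \<phi>
    by (simp add: group_hom_def group_hom_axioms_def G.group_axioms B.factorgroup_is_group)
  have "\<phi> ` carrier G = carrier (H Mod B)"
    by (auto simp: \<phi>_def FactGroup_def RCOSETS_def surj[symmetric])
  then have "G Mod kernel G (H Mod B) \<phi> \<cong> H Mod B"
    by (rule \<phi>.FactGroup_iso)
  moreover have "kernel G (H Mod B) \<phi> = A"
  proof -
    have "B #>\<^bsub>H\<^esub> h g = B \<longleftrightarrow> h g \<in> B" if "g \<in> carrier G" for g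
      using H.rcos_self[OF group_hom.hom_closed[OF hom that] B.subgroup_axioms]
        B.rcos_const[OF H.group_axioms] by blast
    then show ?thesis
      using A preimage by (auto simp: kernel_def FactGroup_def \<phi>_def)
  qed
  ultimately show ?thesis by simp
qed

lemma Zvec_simps [simp]:
  "carrier (Zvec M) = {f. \<forall>k\<ge>M. f k = 0}"
  "f \<otimes>\<^bsub>Zvec M\<^esub> g = (\<lambda>k. f k + g k)"
  "\<one>\<^bsub>Zvec M\<^esub> = (\<lambda>k. 0)"
  by (simp_all add: Zvec_def)

lemma Zvec_comm_group: "comm_group (Zvec M)"
proof (rule comm_groupI, simp_all)
  fix x :: "nat \<Rightarrow> int" assume "\<forall>k\<ge>M. x k = 0"
  then show "\<exists>y. (\<forall>k\<ge>M. y k = 0) \<and> (\<lambda>k. y k + x k) = (\<lambda>k. 0)"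
    by (intro exI[of _ "\<lambda>k. - x k"]) auto
qed (auto simp: algebra_simps)

lemma Zvec_inv: "f \<in> carrier (Zvec M) \<Longrightarrow> inv\<^bsub>Zvec M\<^esub> f = (\<lambda>k. - f k)"
  by (rule group.inv_equality[OF comm_group.axioms(2)[OF Zvec_comm_group]]) auto

lemma generate_Zvec_subset:
  assumes "S \<subseteq> carrier (Zvec M)" "S \<subseteq> T" "(\<lambda>k. 0) \<in> T"
    and "\<And>f g. f \<in> T \<Longrightarrow> g \<in> T \<Longrightarrow> (\<lambda>k. f k + g k) \<in> T"
    and "\<And>f. f \<in> T \<Longrightarrow> (\<lambda>k. - f k) \<in> T"
  shows "generate (Zvec M) S \<subseteq> T"
proof
  fix f assume "f \<in> generate (Zvec M) S"
  then show "f \<in> T"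
  proof (induction rule: generate.induct)
    case (inv h)
    then have "inv\<^bsub>Zvec M\<^esub> h = (\<lambda>k. - h k)" using assms(1) by (blast intro: Zvec_inv)
    then show ?case using inv assms by auto
  qed (use assms in auto)
qed

definition basis_vec :: "nat \<Rightarrow> nat \<Rightarrow> nat \<Rightarrow> int" where
  "basis_vec M u = (\<lambda>k. if k = u mod M then 1 else 0)"

lemma basis_vec_outside: assumes "0 < M" "M \<le> k" shows "basis_vec M u k = 0"
proof -
  have "u mod M < M" using assms(1) by simp
  then show ?thesis using assms(2) by (auto simp: basis_vec_def)
qed

lemma basis_vec_mod_larger: assumes "0 < n" "n \<le> N" shows "basis_vec n u = basis_vec N (u mod n)"
proof -
  have "u mod n < N" using assms mod_less_divisor[of n u] by linarith
  then show ?thesis by (auto simp: basis_vec_def fun_eq_iff)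
qed

lemma sum_basis_vec_mult: assumes "0 < M" shows "(\<Sum>k<M. basis_vec M u k * g k) = g (u mod M)"
proof -
  have "(\<Sum>k<M. basis_vec M u k * g k) = (\<Sum>k<M. if k = u mod M then g k else 0)"
    by (rule sum.cong) (auto simp: basis_vec_def)
  also have "\<dots> = g (u mod M)" using assms by (simp add: sum.delta)
  finally show ?thesis .
qed

lemma Zvec_eq_sum_basis_vec:
  assumes "f \<in> carrier (Zvec M)" shows "f = (\<lambda>k. \<Sum>i<M. f i * basis_vec M i k)"
proof
  fix k
  have "(\<Sum>i<M. f i * basis_vec M i k) = (\<Sum>i<M. if i = k then f k else 0)"
    by (rule sum.cong) (auto simp: basis_vec_def)
  also have "\<dots> = f k" using assms by (simp add: sum.delta)
  finally show "f k = (\<Sum>i<M. f i * basis_vec M i k)" by simp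
qed

lemma relvec_eq_sum_basis_vec:
  assumes "0 < M" shows "relvec p j M i = (\<lambda>k. \<Sum>m\<le>j. coeff p m * basis_vec M (i + m) k)"
proof
  fix k
  show "relvec p j M i k = (\<Sum>m\<le>j. coeff p m * basis_vec M (i + m) k)"
  proof (cases "k < M")
    case True
    then show ?thesis
      by (simp add: relvec_def basis_vec_def if_distrib eq_commute cong: if_cong)
  next
    case False
    then show ?thesis using assms by (simp add: relvec_def basis_vec_outside)
  qed
qed

lemma relvec_mod: "0 < M \<Longrightarrow> relvec p j M (i mod M) = relvec p j M i"
  by (simp add: relvec_eq_sum_basis_vec basis_vec_def mod_add_left_eq)

definition rel_subgroup :: "int poly \<Rightarrow> nat \<Rightarrow> nat \<Rightarrow> (nat \<Rightarrow> int) set" where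
  "rel_subgroup p j M = generate (Zvec M) (relvec p j M ` {..<M})"

lemma Gpres_eq_Mod_rel_subgroup: "Gpres p j M = Zvec M Mod rel_subgroup p j M"
  by (simp add: Gpres_def rel_subgroup_def)

lemma relvec_in_Zvec: "relvec p j M i \<in> carrier (Zvec M)"
  by (auto simp: relvec_def)

lemma subgroup_rel_subgroup: "subgroup (rel_subgroup p j M) (Zvec M)"
  unfolding rel_subgroup_def
  by (rule group.generate_is_subgroup[OF comm_group.axioms(2)[OF Zvec_comm_group]])
     (use relvec_in_Zvec in blast)

lemma normal_rel_subgroup: "rel_subgroup p j M \<lhd> Zvec M"
  by (rule comm_group.subgroup_imp_normal[OF Zvec_comm_group subgroup_rel_subgroup])

lemma rel_subgroup_subset_Zvec: "rel_subgroup p j M \<subseteq> carrier (Zvec M)"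
  using subgroup.subset[OF subgroup_rel_subgroup] .

lemma rel_subgroup_zero: "(\<lambda>k. 0) \<in> rel_subgroup p j M"
  using subgroup.one_closed[OF subgroup_rel_subgroup] by simp

lemma rel_subgroup_add:
  "f \<in> rel_subgroup p j M \<Longrightarrow> g \<in> rel_subgroup p j M \<Longrightarrow> (\<lambda>k. f k + g k) \<in> rel_subgroup p j M"
  using subgroup.m_closed[OF subgroup_rel_subgroup] by fastforce

lemma rel_subgroup_neg:
  assumes f: "f \<in> rel_subgroup p j M" shows "(\<lambda>k. - f k) \<in> rel_subgroup p j M"
proof -
  have "inv\<^bsub>Zvec M\<^esub> f = (\<lambda>k. - f k)"
    using f rel_subgroup_subset_Zvec by (blast intro: Zvec_inv)
  then show ?thesis using subgroup.m_inv_closed[OF subgroup_rel_subgroup f] by simp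
qed

lemma rel_subgroup_smult:
  assumes f: "f \<in> rel_subgroup p j M" shows "(\<lambda>k. c * f k) \<in> rel_subgroup p j M"
proof -
  have nat_mult: "(\<lambda>k. int m * f k) \<in> rel_subgroup p j M" for m
  proof (induction m)
    case (Suc m)
    then show ?case using rel_subgroup_add[OF Suc f] by (simp add: distrib_right add.commute)
  qed (simp add: rel_subgroup_zero)
  show ?thesis
  proof (cases "c \<ge> 0")
    case True
    then have "c = int (nat c)" by simp
    then show ?thesis using nat_mult[of "nat c"] by simp
  next
    case False
    then have "(\<lambda>k. c * f k) = (\<lambda>k. - (int (nat (- c)) * f k))" by simp
    then show ?thesis using rel_subgroup_neg[OF nat_mult[of "nat (- c)"]] by simp
  qed
qed

lemma rel_subgroup_sum:
  "finite I \<Longrightarrow> (\<And>i. i \<in> I \<Longrightarrow> F i \<in> rel_subgroup p j M)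
    \<Longrightarrow> (\<lambda>k. \<Sum>i\<in>I. F i k) \<in> rel_subgroup p j M"
  by (induction I rule: finite_induct) (auto intro: rel_subgroup_zero rel_subgroup_add)

lemma relvec_in_rel_subgroup: assumes "0 < M" shows "relvec p j M i \<in> rel_subgroup p j M"
proof -
  have "relvec p j M (i mod M) \<in> rel_subgroup p j M"
    unfolding rel_subgroup_def by (rule generate.incl) (use assms in simp)
  then show ?thesis using relvec_mod[OF assms] by simp
qed

lemma sum_coeff_mult_shift:
  fixes p q :: "'a::comm_semiring_0 poly" and H :: "nat \<Rightarrow> 'a"
  assumes "degree p \<le> j" "degree q \<le> l"
  shows "(\<Sum>r\<le>l. \<Sum>m\<le>j. coeff q r * coeff p m * H (m + r)) = (\<Sum>d\<le>j+l. coeff (p * q) d * H d)"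
proof -
  define g where "g i r = coeff p i * coeff q r * H (i + r)" for i r
  have "(\<Sum>d\<le>j+l. coeff (p * q) d * H d) = (\<Sum>d\<le>j+l. \<Sum>i\<le>d. g i (d - i))"
    by (auto simp: coeff_mult sum_distrib_right g_def intro!: sum.cong)
  also have "\<dots> = (\<Sum>(i, r)\<in>{(i, r). i + r \<le> j + l}. g i r)"
    by (rule sum.triangle_reindex_eq[symmetric])
  also have "\<dots> = (\<Sum>(i, r)\<in>{..j} \<times> {..l}. g i r)"
  proof (rule sum.mono_neutral_right)
    show "finite {(i, r). i + r \<le> j + l}"
      by (rule finite_subset[of _ "{..j+l} \<times> {..j+l}"]) auto
    show "\<forall>x\<in>{(i, r). i + r \<le> j + l} - {..j} \<times> {..l}. (case x of (i, r) \<Rightarrow> g i r) = 0"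
    proof
      fix x assume "x \<in> {(i, r). i + r \<le> j + l} - {..j} \<times> {..l}"
      then obtain i r where x: "x = (i, r)" and "j < i \<or> l < r" by (cases x) (auto simp: not_le)
      then have "coeff p i = 0 \<or> coeff q r = 0" using assms by (auto intro!: coeff_eq_0)
      then show "(case x of (i, r) \<Rightarrow> g i r) = 0" using x by (auto simp: g_def)
    qed
  qed auto
  also have "\<dots> = (\<Sum>i\<le>j. \<Sum>r\<le>l. g i r)" by (rule sum.cartesian_product[symmetric])
  also have "\<dots> = (\<Sum>r\<le>l. \<Sum>i\<le>j. g i r)" by (rule sum.swap)
  finally show ?thesis by (simp add: g_def mult.commute mult.left_commute)
qed

text \<open>\<open>gen_cong p j M u v\<close> says that \<open>x\<^sub>u = x\<^sub>v\<close> in \<open>G\<^sub>M\<close>.\<close>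

definition gen_cong :: "int poly \<Rightarrow> nat \<Rightarrow> nat \<Rightarrow> nat \<Rightarrow> nat \<Rightarrow> bool" where
  "gen_cong p j M u v \<longleftrightarrow> (\<lambda>k. basis_vec M u k - basis_vec M v k) \<in> rel_subgroup p j M"

lemma gen_cong_mod: "u mod M = v mod M \<Longrightarrow> gen_cong p j M u v"
  by (simp add: gen_cong_def basis_vec_def rel_subgroup_zero)

lemma gen_cong_sym: "gen_cong p j M u v \<Longrightarrow> gen_cong p j M v u"
  unfolding gen_cong_def using rel_subgroup_neg by fastforce

lemma gen_cong_trans: "gen_cong p j M u v \<Longrightarrow> gen_cong p j M v w \<Longrightarrow> gen_cong p j M u w"
  unfolding gen_cong_def using rel_subgroup_add by fastforce

lemma sum_basis_vec_diff_in_rel_subgroup: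
  assumes "finite I" "\<And>i. i \<in> I \<Longrightarrow> gen_cong p j M (u i) (v i)"
  shows "(\<lambda>k. (\<Sum>i\<in>I. c i * basis_vec M (u i) k) - (\<Sum>i\<in>I. c i * basis_vec M (v i) k))
    \<in> rel_subgroup p j M"
proof -
  have "(\<lambda>k. \<Sum>i\<in>I. c i * (basis_vec M (u i) k - basis_vec M (v i) k)) \<in> rel_subgroup p j M"
    using assms by (intro rel_subgroup_sum rel_subgroup_smult) (auto simp: gen_cong_def)
  then show ?thesis by (simp add: sum_subtractf right_diff_distrib)
qed

locale periodic_presentation =
  fixes p q :: "int poly" and j l :: nat
  assumes period_pos: "0 < j + l"
    and degree_p: "degree p \<le> j" and degree_q: "degree q \<le> l"
    and p_mult_q: "p * q = 1 - monom 1 (j + l)"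
begin

lemma gen_cong_period: "0 < M \<Longrightarrow> gen_cong p j M a (a + (j + l))"
proof -
  assume M: "0 < M"
  have "(\<lambda>k. \<Sum>r\<le>l. coeff q r * relvec p j M (a + r) k) \<in> rel_subgroup p j M"
    using M by (intro rel_subgroup_sum rel_subgroup_smult relvec_in_rel_subgroup) auto
  moreover have "(\<Sum>r\<le>l. coeff q r * relvec p j M (a + r) k)
      = basis_vec M a k - basis_vec M (a + (j + l)) k" for k
  proof -
    define H where "H d = basis_vec M (a + d) k" for d
    have "(\<Sum>r\<le>l. coeff q r * relvec p j M (a + r) k)
        = (\<Sum>r\<le>l. \<Sum>m\<le>j. coeff q r * coeff p m * H (m + r))"
      by (simp add: relvec_eq_sum_basis_vec[OF M] sum_distrib_left H_def mult.assoc
          add.commute add.left_commute)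
    also have "\<dots> = (\<Sum>d\<le>j+l. coeff (p * q) d * H d)"
      by (rule sum_coeff_mult_shift[OF degree_p degree_q])
    also have "\<dots> = (\<Sum>d\<le>j+l. (if d = 0 then H d else 0) - (if d = j + l then H d else 0))"
      using period_pos by (intro sum.cong) (auto simp: p_mult_q coeff_monom)
    also have "\<dots> = H 0 - H (j + l)" by (simp add: sum_subtractf)
    finally show ?thesis by (simp add: H_def)
  qed
  ultimately show ?thesis by (simp add: gen_cong_def)
qed

lemma gen_cong_period_mult: "0 < M \<Longrightarrow> gen_cong p j M a (a + (j + l) * c)"
proof (induction c)
  case 0
  then show ?case by (simp add: gen_cong_mod)
next
  case (Suc c)
  then show ?case
    using gen_cong_trans gen_cong_period[of M "a + (j + l) * c"] by (simp add: algebra_simps)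
qed

lemma gen_cong_mod_extended:
  assumes n: "0 < n" shows "gen_cong p j n (u mod (n + j + l)) u"
proof -
  define N where "N = n + j + l"
  have "u = u mod N + (j + l) * (u div N) + n * (u div N)"
    using mod_mult_div_eq[of u N] by (simp add: N_def algebra_simps)
  then have "gen_cong p j n (u mod N + (j + l) * (u div N)) u"
    by (intro gen_cong_mod) (metis mod_mult_self2)
  with gen_cong_period_mult[OF n] show ?thesis
    unfolding N_def by (blast intro: gen_cong_trans)
qed

lemma gen_cong_mod_reduced:
  assumes n: "0 < n" shows "gen_cong p j (n + j + l) (u mod n) u"
proof -
  define N where "N = n + j + l"
  define w where "w = u mod n"
  define c where "c = u div n"
  have u: "u = w + n * c" by (simp add: w_def c_def)
  obtain k where k: "j + l = Suc k" using period_pos by (cases "j + l") auto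
  \<comment> \<open>\<open>n \<equiv> (j + l) (N - 1)\<close> modulo \<open>N\<close>, so shifting by \<open>n\<close> is a multiple of the period\<close>
  have "(j + l) * (N - 1) = N * k + n"
    unfolding N_def using k by (simp add: algebra_simps)
  then have "(j + l) * ((N - 1) * c) = (N * k + n) * c"
    by (simp flip: mult.assoc)
  then have "w + (j + l) * ((N - 1) * c) = u + N * (k * c)"
    using u by (simp add: algebra_simps)
  then have "gen_cong p j N (w + (j + l) * ((N - 1) * c)) u"
    by (intro gen_cong_mod) simp
  moreover have "gen_cong p j N w (w + (j + l) * ((N - 1) * c))"
    using n by (intro gen_cong_period_mult) (simp add: N_def)
  ultimately show ?thesis
    unfolding N_def w_def by (rule gen_cong_trans[rotated])
qed

end

definition fold_vec :: "nat \<Rightarrow> nat \<Rightarrow> (nat \<Rightarrow> int) \<Rightarrow> (nat \<Rightarrow> int)" where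
  "fold_vec n N f = (\<lambda>k. \<Sum>i<N. f i * basis_vec n i k)"

lemma fold_vec_in_Zvec: "0 < n \<Longrightarrow> fold_vec n N f \<in> carrier (Zvec n)"
  by (auto simp: fold_vec_def basis_vec_outside)

lemma fold_vec_add: "fold_vec n N (\<lambda>k. f k + g k) = (\<lambda>k. fold_vec n N f k + fold_vec n N g k)"
  by (auto simp: fold_vec_def sum.distrib distrib_right)

lemma fold_vec_neg: "fold_vec n N (\<lambda>k. - f k) = (\<lambda>k. - fold_vec n N f k)"
  by (auto simp: fold_vec_def sum_negf)

lemma fold_vec_zero: "fold_vec n N (\<lambda>k. 0) = (\<lambda>k. 0)"
  by (simp add: fold_vec_def)

lemma fold_vec_id: assumes "g \<in> carrier (Zvec n)" "n \<le> N" shows "fold_vec n N g = g"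
proof
  fix k
  have "(\<Sum>i<N. g i * basis_vec n i k) = (\<Sum>i<N. if i = k then g k else 0)"
  proof (rule sum.cong)
    fix i
    show "g i * basis_vec n i k = (if i = k then g k else 0)"
      using assms by (cases "i < n") (auto simp: basis_vec_def)
  qed simp
  also have "\<dots> = g k" using assms by (auto simp: sum.delta)
  finally show "fold_vec n N g k = g k" by (simp add: fold_vec_def)
qed

lemma fold_vec_onto:
  assumes "0 < n" "n \<le> N" shows "fold_vec n N ` carrier (Zvec N) = carrier (Zvec n)"
proof
  show "fold_vec n N ` carrier (Zvec N) \<subseteq> carrier (Zvec n)"
    using fold_vec_in_Zvec[OF assms(1)] by blast
  show "carrier (Zvec n) \<subseteq> fold_vec n N ` carrier (Zvec N)"
  proof
    fix g assume g: "g \<in> carrier (Zvec n)"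
    then have "g \<in> carrier (Zvec N)" using assms(2) by auto
    then show "g \<in> fold_vec n N ` carrier (Zvec N)"
      using fold_vec_id[OF g assms(2)] by (metis image_eqI)
  qed
qed

lemma group_hom_fold_vec:
  assumes "0 < n" shows "group_hom (Zvec N) (Zvec n) (fold_vec n N)"
proof -
  have "fold_vec n N \<in> hom (Zvec N) (Zvec n)"
  proof (rule homI)
    show "fold_vec n N f \<in> carrier (Zvec n)" for f by (rule fold_vec_in_Zvec[OF assms])
  qed (simp add: fold_vec_add)
  then show ?thesis
    using Zvec_comm_group[THEN comm_group.axioms(2)] by (simp add: group_hom_def group_hom_axioms_def)
qed

context periodic_presentation
begin

lemma fold_vec_relvec:
  assumes n: "0 < n" shows "fold_vec n (n + j + l) (relvec p j (n + j + l) i) \<in> rel_subgroup p j n"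
proof -
  define N where "N = n + j + l"
  have N: "0 < N" using n by (simp add: N_def)
  define D where "D = (\<lambda>k. (\<Sum>m\<le>j. coeff p m * basis_vec n ((i + m) mod N) k)
      - (\<Sum>m\<le>j. coeff p m * basis_vec n (i + m) k))"
  have "fold_vec n N (relvec p j N i) = (\<lambda>k. D k + relvec p j n i k)"
  proof
    fix k
    have "fold_vec n N (relvec p j N i) k
        = (\<Sum>m\<le>j. coeff p m * (\<Sum>u<N. basis_vec N (i + m) u * basis_vec n u k))"
      by (simp add: fold_vec_def relvec_eq_sum_basis_vec[OF N] sum_distrib_right
          sum_distrib_left mult.assoc sum.swap[of _ "{..<N}"])
    then show "fold_vec n N (relvec p j N i) k = D k + relvec p j n i k"
      by (simp add: D_def sum_basis_vec_mult[OF N] relvec_eq_sum_basis_vec[OF n])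
  qed
  moreover have "D \<in> rel_subgroup p j n"
    unfolding D_def N_def
    by (rule sum_basis_vec_diff_in_rel_subgroup) (auto intro: gen_cong_mod_extended[OF n])
  ultimately show ?thesis
    using rel_subgroup_add[OF _ relvec_in_rel_subgroup[OF n]] unfolding N_def[symmetric] by simp
qed

lemma fold_vec_in_rel_subgroup:
  assumes n: "0 < n" and f: "f \<in> rel_subgroup p j (n + j + l)"
  shows "fold_vec n (n + j + l) f \<in> rel_subgroup p j n"
proof -
  have "rel_subgroup p j (n + j + l) \<subseteq> {f. fold_vec n (n + j + l) f \<in> rel_subgroup p j n}"
    unfolding rel_subgroup_def[of p j "n + j + l"]
    by (rule generate_Zvec_subset)
       (use relvec_in_Zvec in blast,
        auto simp: fold_vec_add fold_vec_neg fold_vec_zero fold_vec_relvec[OF n]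
          intro: rel_subgroup_zero rel_subgroup_add rel_subgroup_neg)
  then show ?thesis using f by blast
qed

lemma rel_subgroup_subset_extended:
  assumes n: "0 < n" shows "rel_subgroup p j n \<subseteq> rel_subgroup p j (n + j + l)"
proof -
  define N where "N = n + j + l"
  have N: "0 < N" and nN: "n \<le> N" using n by (auto simp: N_def)
  have "relvec p j n i \<in> rel_subgroup p j N" for i
  proof -
    define D where "D = (\<lambda>k. (\<Sum>m\<le>j. coeff p m * basis_vec N ((i + m) mod n) k)
        - (\<Sum>m\<le>j. coeff p m * basis_vec N (i + m) k))"
    have "D \<in> rel_subgroup p j N"
      unfolding D_def N_def
      by (rule sum_basis_vec_diff_in_rel_subgroup) (auto intro: gen_cong_mod_reduced[OF n])
    moreover have "relvec p j n i = (\<lambda>k. D k + relvec p j N i k)"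
      by (simp add: D_def relvec_eq_sum_basis_vec[OF n] relvec_eq_sum_basis_vec[OF N]
          basis_vec_mod_larger[OF n nN])
    ultimately show ?thesis using rel_subgroup_add[OF _ relvec_in_rel_subgroup[OF N]] by simp
  qed
  then show ?thesis
    unfolding rel_subgroup_def[of p j n] N_def[symmetric]
    by (intro generate_Zvec_subset)
       (use relvec_in_Zvec in blast, auto intro: rel_subgroup_zero rel_subgroup_add rel_subgroup_neg)
qed

lemma fold_vec_in_rel_subgroup_iff:
  assumes n: "0 < n" and f: "f \<in> carrier (Zvec (n + j + l))"
  shows "fold_vec n (n + j + l) f \<in> rel_subgroup p j n \<longleftrightarrow> f \<in> rel_subgroup p j (n + j + l)"
proof
  define N where "N = n + j + l"
  have nN: "n \<le> N" by (simp add: N_def)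
  assume fold: "fold_vec n (n + j + l) f \<in> rel_subgroup p j n"
  have "(\<lambda>k. (\<Sum>i<N. f i * basis_vec N i k) - (\<Sum>i<N. f i * basis_vec N (i mod n) k))
      \<in> rel_subgroup p j N"
    unfolding N_def
    by (rule sum_basis_vec_diff_in_rel_subgroup) (auto intro: gen_cong_sym gen_cong_mod_reduced[OF n])
  moreover have "fold_vec n N f \<in> rel_subgroup p j N"
    using rel_subgroup_subset_extended[OF n] fold by (auto simp: N_def)
  ultimately have "(\<lambda>k. (\<Sum>i<N. f i * basis_vec N i k) - (\<Sum>i<N. f i * basis_vec N (i mod n) k)
      + fold_vec n N f k) \<in> rel_subgroup p j N"
    by (rule rel_subgroup_add)
  moreover have "f = (\<lambda>k. \<Sum>i<N. f i * basis_vec N i k)"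
    using f by (intro Zvec_eq_sum_basis_vec) (simp add: N_def)
  ultimately show "f \<in> rel_subgroup p j (n + j + l)"
    by (simp add: fold_vec_def basis_vec_mod_larger[OF n nN] N_def)
qed (rule fold_vec_in_rel_subgroup[OF n])

end

theorem theorem5p5:
  fixes p q :: "int poly" and j l n :: nat
  assumes "j > 0"
    and "degree p \<le> j"
    and "degree q \<le> l"
    and "p * q = 1 - monom 1 (j + l)"
    and "n \<ge> j + 1"
  shows "Gpres p j n \<cong> Gpres p j (n + j + l)"
proof -
  interpret periodic_presentation p q j l
    using assms by unfold_locales auto
  have n: "0 < n" and nN: "n \<le> n + j + l" using assms(5) by simp_all
  have "Zvec (n + j + l) Mod rel_subgroup p j (n + j + l) \<cong> Zvec n Mod rel_subgroup p j n"
    by (rule FactGroup_iso_of_surj_hom[OF group_hom_fold_vec[OF n] fold_vec_onto[OF n nN]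
          normal_rel_subgroup rel_subgroup_subset_Zvec fold_vec_in_rel_subgroup_iff[OF n]])
  then show ?thesis
    unfolding Gpres_eq_Mod_rel_subgroup
    by (rule group.iso_sym[OF normal.factorgroup_is_group[OF normal_rel_subgroup]])
qed

end
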